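(* Let $R$ be a subring of a ring $S$, and assume that every semiprime factor ring of $R$ and of $S$ is left or right Goldie and that the prime radical of every factor ring of $R$ and of $S$ is nilpotent. (i) If $I$ is an ideal of $R$ and $J$ an ideal of $S$ with $V_R(J\cap R)\subseteq V_R(I)$, then $V_S(J)\subseteq V_S(I^S)$. (ii) $\lambda$ is a left adjoint to $\rho$ if and only if for all ideals $I$ of $R$ and $J$ of $S$, $V_S(J)\subseteq V_S(I^S)$ implies $V_R(J\cap R)\subseteq V_R(I)$.
   Context: $\operatorname{Spec}$ carries the Zariski topology, closed sets $V_A(X)=\{P\in\operatorname{Spec} A:P\supseteq X\}$; for $U\subseteq\operatorname{Spec} A$, $I(U)$ is the intersection of the primes in $U$. For an ideal $I$ of $R$, $I^S=\operatorname{ann}_S(S/SI)$. The functor $\lambda$ sends a closed $V\subseteq\operatorname{Spec} S$ to $V_R(I(V)\cap R)$; the functor $\rho$ sends a closed $V\subseteq\operatorname{Spec} R$ to $V_S(I(V)^S)$. "$\lambda$ is a left adjoint to $\rho$" means $\lambda U\subseteq V\iff U\subseteq\rho V$ for all closed $U\subseteq\operatorname{Spec} S$, $V\subseteq\operatorname{Spec} R$. *)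

theory Defs
  imports "HOL-Algebra.Algebra"
begin

definition left_ideal :: "'a set \<Rightarrow> ('a, 'b) ring_scheme \<Rightarrow> bool" where
  "left_ideal L A \<longleftrightarrow> subgroup L (add_monoid A) \<and>
     (\<forall>a \<in> carrier A. \<forall>x \<in> L. a \<otimes>\<^bsub>A\<^esub> x \<in> L)"

definition right_ideal :: "'a set \<Rightarrow> ('a, 'b) ring_scheme \<Rightarrow> bool" where
  "right_ideal L A \<longleftrightarrow> subgroup L (add_monoid A) \<and>
     (\<forall>a \<in> carrier A. \<forall>x \<in> L. x \<otimes>\<^bsub>A\<^esub> a \<in> L)"

definition prime_ideal :: "'a set \<Rightarrow> ('a, 'b) ring_scheme \<Rightarrow> bool" where
  "prime_ideal P A \<longleftrightarrow> ideal P A \<and> P \<noteq> carrier A \<and>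
     (\<forall>I J. ideal I A \<longrightarrow> ideal J A \<longrightarrow> ideal_prod A I J \<subseteq> P \<longrightarrow> I \<subseteq> P \<or> J \<subseteq> P)"

definition Spec :: "('a, 'b) ring_scheme \<Rightarrow> 'a set set" where
  "Spec A = {P. prime_ideal P A}"

definition VV :: "('a, 'b) ring_scheme \<Rightarrow> 'a set \<Rightarrow> 'a set set" where
  "VV A Z = {P. P \<in> Spec A \<and> Z \<subseteq> P}"

definition zclosed :: "('a, 'b) ring_scheme \<Rightarrow> 'a set set \<Rightarrow> bool" where
  "zclosed A U \<longleftrightarrow> (\<exists>Z. U = VV A Z)"

definition II :: "('a, 'b) ring_scheme \<Rightarrow> 'a set set \<Rightarrow> 'a set" where
  "II A U = carrier A \<inter> \<Inter> U"

fun ideal_pow :: "('a, 'b) ring_scheme \<Rightarrow> 'a set \<Rightarrow> nat \<Rightarrow> 'a set" where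
  "ideal_pow A N 0 = carrier A"
| "ideal_pow A N (Suc n) = ideal_prod A (ideal_pow A N n) N"

definition nilpotent_ideal :: "'a set \<Rightarrow> ('a, 'b) ring_scheme \<Rightarrow> bool" where
  "nilpotent_ideal N A \<longleftrightarrow> (\<exists>n. ideal_pow A N n \<subseteq> {\<zero>\<^bsub>A\<^esub>})"

definition prime_radical :: "('a, 'b) ring_scheme \<Rightarrow> 'a set" where
  "prime_radical A = carrier A \<inter> \<Inter> (Spec A)"

definition semiprime_ring :: "('a, 'b) ring_scheme \<Rightarrow> bool" where
  "semiprime_ring A \<longleftrightarrow> (\<forall>N. ideal N A \<longrightarrow> nilpotent_ideal N A \<longrightarrow> N = {\<zero>\<^bsub>A\<^esub>})"

definition left_ann :: "('a, 'b) ring_scheme \<Rightarrow> 'a set \<Rightarrow> 'a set" where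
  "left_ann A Z = {a \<in> carrier A. \<forall>x \<in> Z. a \<otimes>\<^bsub>A\<^esub> x = \<zero>\<^bsub>A\<^esub>}"

definition right_ann :: "('a, 'b) ring_scheme \<Rightarrow> 'a set \<Rightarrow> 'a set" where
  "right_ann A Z = {a \<in> carrier A. \<forall>x \<in> Z. x \<otimes>\<^bsub>A\<^esub> a = \<zero>\<^bsub>A\<^esub>}"

definition sum_upto :: "('a, 'b) ring_scheme \<Rightarrow> (nat \<Rightarrow> 'a set) \<Rightarrow> nat \<Rightarrow> 'a set" where
  "sum_upto A L n = {y. \<exists>x. (\<forall>m<n. x m \<in> L m) \<and> y = finsum A x {..<n}}"

definition infinite_direct_sum :: "('a, 'b) ring_scheme \<Rightarrow> (nat \<Rightarrow> 'a set) \<Rightarrow> bool" where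
  "infinite_direct_sum A L \<longleftrightarrow>
     (\<forall>n. L n \<noteq> {\<zero>\<^bsub>A\<^esub>} \<and> L n \<inter> sum_upto A L n = {\<zero>\<^bsub>A\<^esub>})"

definition acc_on :: "'a set set \<Rightarrow> bool" where
  "acc_on \<F> \<longleftrightarrow> \<not> (\<exists>f :: nat \<Rightarrow> 'a set. (\<forall>n. f n \<in> \<F> \<and> f n \<subset> f (Suc n)))"

text \<open>Left Goldie: finite left uniform dimension and ACC on left annihilators.\<close>
definition left_goldie :: "('a, 'b) ring_scheme \<Rightarrow> bool" where
  "left_goldie A \<longleftrightarrow>
     \<not> (\<exists>L. (\<forall>n. left_ideal (L n) A) \<and> infinite_direct_sum A L) \<and>
     acc_on {left_ann A Z | Z. Z \<subseteq> carrier A}"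

definition right_goldie :: "('a, 'b) ring_scheme \<Rightarrow> bool" where
  "right_goldie A \<longleftrightarrow>
     \<not> (\<exists>L. (\<forall>n. right_ideal (L n) A) \<and> infinite_direct_sum A L) \<and>
     acc_on {right_ann A Z | Z. Z \<subseteq> carrier A}"

definition factor_rings_ok :: "('a, 'b) ring_scheme \<Rightarrow> bool" where
  "factor_rings_ok A \<longleftrightarrow>
     (\<forall>I. ideal I A \<longrightarrow>
        (semiprime_ring (A Quot I) \<longrightarrow> left_goldie (A Quot I) \<or> right_goldie (A Quot I)) \<and>
        nilpotent_ideal (prime_radical (A Quot I)) (A Quot I))"

text \<open>The left ideal \<open>SI\<close> of \<open>S\<close> generated by \<open>I\<close>.\<close>
definition left_gen :: "('a, 'b) ring_scheme \<Rightarrow> 'a set \<Rightarrow> 'a set" where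
  "left_gen S I = \<Inter> {L. left_ideal L S \<and> I \<subseteq> L}"

text \<open>\<open>I^S = ann_S(S/SI) = {s \<in> S. s t \<in> SI for all t \<in> S}\<close>.\<close>
definition ext_ideal :: "('a, 'b) ring_scheme \<Rightarrow> 'a set \<Rightarrow> 'a set" where
  "ext_ideal S I = {s \<in> carrier S. \<forall>t \<in> carrier S. s \<otimes>\<^bsub>S\<^esub> t \<in> left_gen S I}"

definition lam :: "('a, 'b) ring_scheme \<Rightarrow> 'a set \<Rightarrow> 'a set set \<Rightarrow> 'a set set" where
  "lam S R U = VV (S\<lparr>carrier := R\<rparr>) (II S U \<inter> R)"

definition rho :: "('a, 'b) ring_scheme \<Rightarrow> 'a set \<Rightarrow> 'a set set \<Rightarrow> 'a set set" where
  "rho S R V = VV S (ext_ideal S (II (S\<lparr>carrier := R\<rparr>) V))"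

definition lam_left_adjoint_rho :: "('a, 'b) ring_scheme \<Rightarrow> 'a set \<Rightarrow> bool" where
  "lam_left_adjoint_rho S R \<longleftrightarrow>
     (\<forall>U V. zclosed S U \<longrightarrow> zclosed (S\<lparr>carrier := R\<rparr>) V \<longrightarrow>
        (lam S R U \<subseteq> V \<longleftrightarrow> U \<subseteq> rho S R V))"

end

theory Submission
  imports Defs
begin

(* Nilpotence of the prime radical of A/K means that the radical of K (the intersection
   of the primes containing K) has a power inside K.  Since a prime containing N^n contains N,
   K and its radical cut out the same closed set.
   (i) If V_R(J \<inter> R) \<subseteq> V_R(I), then I lies in the radical of J \<inter> R, so I^n \<subseteq> J for some n.
   Extension is submultiplicative, (I^S)^n \<subseteq> (I^n)^S, and (I^n)^S \<subseteq> S I^n \<subseteq> J; hence every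
   prime of S containing J contains I^S.
   (ii) In the same way, replacing J or I by its radical changes neither V_R(J \<inter> R) nor V_S(I^S).
   So \<lambda>(V_S J) = V_R(J \<inter> R) and \<rho>(V_R I) = V_S(I^S), and the adjunction says that the two
   inclusions are equivalent; one implication is (i). *)

section \<open>Products and powers of ideals\<close>

lemma ideal_subset_carrier: "ideal I R \<Longrightarrow> I \<subseteq> carrier R"
  using ideal.Icarr by (rule subsetI)

lemma ideal_prod_carrier_update:
  fixes R :: "('a, 'b) ring_scheme"
  shows "ideal_prod (R\<lparr>carrier := H\<rparr>) A B = ideal_prod R A B"
proof (intro equalityI subsetI)
  fix x assume "x \<in> ideal_prod (R\<lparr>carrier := H\<rparr>) A B" then show "x \<in> ideal_prod R A B"
    by induct (auto intro: ideal_prod.intros)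
next
  fix x assume "x \<in> ideal_prod R A B" then show "x \<in> ideal_prod (R\<lparr>carrier := H\<rparr>) A B"
    by induct (use ideal_prod.intros[where R = "R\<lparr>carrier := H\<rparr>"] in auto)
qed

lemma (in ring) ideal_prod_mono:
  assumes "A \<subseteq> A'" "B \<subseteq> B'"
  shows "ideal_prod R A B \<subseteq> ideal_prod R A' B'"
proof
  fix x assume "x \<in> ideal_prod R A B" then show "x \<in> ideal_prod R A' B'"
    by induct (use assms in \<open>auto intro: ideal_prod.intros\<close>)
qed

lemma (in ring) ideal_prod_subset:
  assumes "additive_subgroup Q R" and "\<And>a b. a \<in> A \<Longrightarrow> b \<in> B \<Longrightarrow> a \<otimes> b \<in> Q"
  shows "ideal_prod R A B \<subseteq> Q"
proof
  fix z assume "z \<in> ideal_prod R A B" then show "z \<in> Q"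
    by induct (simp_all add: assms(2) additive_subgroup.a_closed[OF assms(1)])
qed

lemma (in ring) ideal_pow_ideal: "ideal N R \<Longrightarrow> ideal (ideal_pow R N n) R"
  by (induct n) (auto simp: oneideal ideal_prod_is_ideal)

lemma (in ring) ideal_pow_mono: "A \<subseteq> B \<Longrightarrow> ideal_pow R A n \<subseteq> ideal_pow R B n"
proof (induct n)
  case (Suc n) then show ?case using ideal_prod_mono[OF Suc] by simp
qed simp

lemma (in ring) ideal_pow_subring_subset:
  assumes "subring H R" "A \<subseteq> B"
  shows "ideal_pow (R\<lparr>carrier := H\<rparr>) A n \<subseteq> ideal_pow R B n"
proof (induct n)
  case 0 then show ?case using subringE(1)[OF assms(1)] by simp
next
  case (Suc n) then show ?case using ideal_prod_mono[OF Suc assms(2)] by (simp add: ideal_prod_carrier_update)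
qed

lemma (in ring) ideal_Int_subring:
  assumes H: "subring H R" and J: "ideal J R"
  shows "ideal (J \<inter> H) (R\<lparr>carrier := H\<rparr>)"
proof (rule idealI)
  show "ring (R\<lparr>carrier := H\<rparr>)" by (rule subring_is_ring[OF H])
  have "subgroup (J \<inter> H) (add_monoid R)"
    by (rule add.subgroups_Inter_pair[OF additive_subgroup.a_subgroup[OF ideal.axioms(1)[OF J]]
          subring.axioms(1)[OF H]])
  then have "subgroup (J \<inter> H) ((add_monoid R)\<lparr>carrier := H\<rparr>)"
    using add.subgroup_incl[OF _ subring.axioms(1)[OF H]] by simp
  then show "subgroup (J \<inter> H) (add_monoid (R\<lparr>carrier := H\<rparr>))" by simp
  show "x \<otimes>\<^bsub>R\<lparr>carrier := H\<rparr>\<^esub> a \<in> J \<inter> H" "a \<otimes>\<^bsub>R\<lparr>carrier := H\<rparr>\<^esub> x \<in> J \<inter> H"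
    if "a \<in> J \<inter> H" "x \<in> carrier (R\<lparr>carrier := H\<rparr>)" for a x
    using that ideal.I_l_closed[OF J] ideal.I_r_closed[OF J] subringE(1,6)[OF H] by auto
qed

lemma (in ring_hom_ring) image_ideal_prod_subset:
  assumes "ideal I R" "ideal J R"
  shows "h ` ideal_prod R I J \<subseteq> ideal_prod S (h ` I) (h ` J)"
proof
  fix y assume "y \<in> h ` ideal_prod R I J"
  then obtain x where x: "x \<in> ideal_prod R I J" and y: "y = h x" by blast
  from x have "h x \<in> ideal_prod S (h ` I) (h ` J)"
  proof induct
    case (prod i j)
    then have "h (i \<otimes> j) = h i \<otimes>\<^bsub>S\<^esub> h j" using assms by (simp add: ideal.Icarr)
    then show ?case using prod by (simp add: ideal_prod.prod)
  next
    case (sum s1 s2)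
    then have "h (s1 \<oplus> s2) = h s1 \<oplus>\<^bsub>S\<^esub> h s2"
      using R.ideal_prod_in_carrier[OF assms] by (blast intro: hom_add)
    then show ?case using sum by (simp add: ideal_prod.sum)
  qed
  with y show "y \<in> ideal_prod S (h ` I) (h ` J)" by simp
qed

lemma (in ring_hom_ring) image_ideal_pow_subset:
  assumes "ideal N R"
  shows "h ` ideal_pow R N n \<subseteq> ideal_pow S (h ` N) n"
proof (induct n)
  case 0 show ?case using hom_closed by (simp add: image_subset_iff)
next
  case (Suc n)
  have "h ` ideal_pow R N (Suc n) \<subseteq> ideal_prod S (h ` ideal_pow R N n) (h ` N)"
    unfolding ideal_pow.simps by (rule image_ideal_prod_subset[OF R.ideal_pow_ideal[OF assms] assms])
  also have "\<dots> \<subseteq> ideal_pow S (h ` N) (Suc n)"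
    unfolding ideal_pow.simps by (rule S.ideal_prod_mono[OF Suc subset_refl])
  finally show ?case .
qed

section \<open>Prime ideals and Zariski-closed sets\<close>

lemma prime_idealD:
  assumes "prime_ideal P A"
  shows "ideal P A" "P \<noteq> carrier A"
    "\<And>I J. ideal I A \<Longrightarrow> ideal J A \<Longrightarrow> ideal_prod A I J \<subseteq> P \<Longrightarrow> I \<subseteq> P \<or> J \<subseteq> P"
  using assms unfolding prime_ideal_def by blast+

lemma prime_ideal_pow_subsetD:
  assumes "ring A" "prime_ideal P A" "ideal N A" "ideal_pow A N n \<subseteq> P"
  shows "N \<subseteq> P"
  using assms(4)
proof (induct n)
  case 0
  then have "P = carrier A" using ideal_subset_carrier[OF prime_idealD(1)[OF assms(2)]] by simp
  with prime_idealD(2)[OF assms(2)] show ?case by contradiction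
next
  case (Suc n)
  have "ideal (ideal_pow A N n) A" by (rule ring.ideal_pow_ideal[OF assms(1,3)])
  with Suc.prems have "ideal_pow A N n \<subseteq> P \<or> N \<subseteq> P"
    using prime_idealD(3)[OF assms(2) _ assms(3)] by simp
  with Suc.hyps show ?case by blast
qed

lemma Spec_imp_ideal: "P \<in> Spec A \<Longrightarrow> ideal P A"
  unfolding Spec_def using prime_idealD(1) by blast

lemma Spec_imp_proper: "P \<in> Spec A \<Longrightarrow> P \<noteq> carrier A"
  unfolding Spec_def using prime_idealD(2) by blast

lemma Spec_subset_carrier: "P \<in> Spec A \<Longrightarrow> P \<subseteq> carrier A"
  by (rule ideal_subset_carrier[OF Spec_imp_ideal])

lemma VV_antimono: "Z \<subseteq> Z' \<Longrightarrow> VV A Z' \<subseteq> VV A Z"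
  by (auto simp: VV_def)

lemma II_ideal:
  assumes "ring A" "U \<subseteq> Spec A"
  shows "ideal (II A U) A"
proof (cases "U = {}")
  case True
  then show ?thesis by (simp add: II_def ring.oneideal[OF assms(1)])
next
  case False
  have ideals: "\<And>P. P \<in> U \<Longrightarrow> ideal P A" using assms(2) Spec_imp_ideal by blast
  then have "\<Inter>U \<subseteq> carrier A" using False ideal_subset_carrier by blast
  then have "II A U = \<Inter>U" by (auto simp: II_def)
  then show ?thesis using ring.i_Intersect[OF assms(1) _ False] ideals by simp
qed

abbreviation ideal_radical :: "('a, 'b) ring_scheme \<Rightarrow> 'a set \<Rightarrow> 'a set" where
  "ideal_radical A K \<equiv> II A (VV A K)"

lemma ideal_radical_ideal: "ring A \<Longrightarrow> ideal (ideal_radical A K) A"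
  by (rule II_ideal) (auto simp: VV_def)

lemma subset_ideal_radical_iff:
  assumes "Z \<subseteq> carrier A"
  shows "Z \<subseteq> ideal_radical A K \<longleftrightarrow> VV A K \<subseteq> VV A Z"
proof
  assume "Z \<subseteq> ideal_radical A K"
  then have "Z \<subseteq> P" if "P \<in> VV A K" for P using that unfolding II_def by blast
  then show "VV A K \<subseteq> VV A Z" unfolding VV_def by blast
next
  assume "VV A K \<subseteq> VV A Z"
  then have "Z \<subseteq> P" if "P \<in> VV A K" for P using that unfolding VV_def by blast
  with assms show "Z \<subseteq> ideal_radical A K" unfolding II_def by blast
qed

lemma VV_II_supset: "U \<subseteq> Spec A \<Longrightarrow> U \<subseteq> VV A (II A U)"
  unfolding VV_def II_def by (rule subsetI) (simp add: subsetD Inf_lower le_infI2)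

lemma zclosed_eq_VV_II:
  assumes "zclosed A U"
  shows "U = VV A (II A U)"
proof -
  obtain Z where Z: "U = VV A Z" using assms by (auto simp: zclosed_def)
  have "VV A (II A U) \<subseteq> U"
  proof (cases "Z \<subseteq> carrier A")
    case True
    then have "Z \<subseteq> II A U" using subset_ideal_radical_iff[OF True, of Z] Z by simp
    then show ?thesis unfolding Z by (rule VV_antimono)
  next
    case False
    then have "U = {}" using Z Spec_subset_carrier by (auto simp: VV_def)
    moreover have "P \<notin> VV A (carrier A)" for P
      using Spec_subset_carrier[of P A] Spec_imp_proper[of P A] by (auto simp: VV_def)
    ultimately show ?thesis by (auto simp: II_def)
  qed
  moreover have "U \<subseteq> VV A (II A U)" by (rule VV_II_supset) (auto simp: Z VV_def)
  ultimately show ?thesis by (rule subset_antisym[rotated])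
qed

lemma zclosed_iff_ideal:
  assumes "ring A"
  shows "zclosed A U \<longleftrightarrow> (\<exists>J. ideal J A \<and> U = VV A J)"
proof
  assume "zclosed A U"
  moreover from this have "U \<subseteq> Spec A" by (auto simp: zclosed_def VV_def)
  ultimately show "\<exists>J. ideal J A \<and> U = VV A J"
    using zclosed_eq_VV_II II_ideal[OF assms] by blast
qed (auto simp: zclosed_def)

lemma VV_subset_VV_if_pow_subset:
  assumes "ring A" "ideal N A" "ideal_pow A N n \<subseteq> K"
  shows "VV A K \<subseteq> VV A N"
proof
  fix P assume P: "P \<in> VV A K"
  then have "prime_ideal P A" "K \<subseteq> P" by (simp_all add: VV_def Spec_def)
  then have "N \<subseteq> P" using prime_ideal_pow_subsetD[OF assms(1) _ assms(2)] assms(3) by blast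
  with P show "P \<in> VV A N" by (simp add: VV_def)
qed

section \<open>Nilpotence of the radical modulo an ideal\<close>

lemma (in ring) prime_ideal_vimage_quot:
  assumes K: "ideal K R" and Q: "prime_ideal Q (R Quot K)"
  shows "prime_ideal {r \<in> carrier R. K +> r \<in> Q} R"
proof -
  interpret h: ring_hom_ring R "R Quot K" "(+>) K" by (rule ideal.rcos_ring_hom_ring[OF K])
  let ?P = "{r \<in> carrier R. K +> r \<in> Q}"
  note Q_ideal = prime_idealD(1)[OF Q]
  have "ideal ?P R" by (rule h.ideal_vimage[OF Q_ideal])
  moreover have "?P \<noteq> carrier R"
  proof
    assume "?P = carrier R"
    then have "K +> \<one> \<in> Q" using one_closed by blast
    then have "\<one>\<^bsub>R Quot K\<^esub> \<in> Q" by simp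
    then have "Q = carrier (R Quot K)" by (rule ideal.one_imp_carrier[OF Q_ideal])
    with prime_idealD(2)[OF Q] show False ..
  qed
  moreover have "I \<subseteq> ?P \<or> J \<subseteq> ?P" if I: "ideal I R" and J: "ideal J R"
    and IJ: "ideal_prod R I J \<subseteq> ?P" for I J
  proof -
    have "ideal_prod (R Quot K) ((+>) K ` I) ((+>) K ` J) \<subseteq> Q"
    proof (rule h.S.ideal_prod_subset[OF ideal.axioms(1)[OF Q_ideal]])
      fix x y assume "x \<in> (+>) K ` I" "y \<in> (+>) K ` J"
      then obtain i j where ij: "i \<in> I" "j \<in> J" and xy: "x = K +> i" "y = K +> j" by blast
      have "i \<otimes> j \<in> ?P" using IJ ideal_prod.prod[OF ij] by (rule subsetD)
      moreover have "K +> (i \<otimes> j) = x \<otimes>\<^bsub>R Quot K\<^esub> y"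
        unfolding xy using ij ideal.Icarr[OF I] ideal.Icarr[OF J] by simp
      ultimately show "x \<otimes>\<^bsub>R Quot K\<^esub> y \<in> Q" by simp
    qed
    then have "(+>) K ` I \<subseteq> Q \<or> (+>) K ` J \<subseteq> Q"
      by (rule prime_idealD(3)[OF Q ring_ideal_imp_quot_ideal[OF K I] ring_ideal_imp_quot_ideal[OF K J]])
    then show ?thesis using ideal.Icarr[OF I] ideal.Icarr[OF J] by (auto simp: image_subset_iff)
  qed
  ultimately show ?thesis unfolding prime_ideal_def by (intro conjI allI impI) simp_all
qed

lemma (in ring) quot_prime_vimage:
  assumes K: "ideal K R" and Q: "prime_ideal Q (R Quot K)"
  shows "{r \<in> carrier R. K +> r \<in> Q} \<in> VV R K"
proof -
  have "K \<subseteq> {r \<in> carrier R. K +> r \<in> Q}"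
  proof
    fix k assume k: "k \<in> K"
    have "\<zero>\<^bsub>R Quot K\<^esub> = K" unfolding FactRing_def by simp
    then have "K +> k = \<zero>\<^bsub>R Quot K\<^esub>" using a_rcos_zero[OF K k] by (rule ssubst)
    then show "k \<in> {r \<in> carrier R. K +> r \<in> Q}"
      using ideal.Icarr[OF K k] additive_subgroup.zero_closed[OF ideal.axioms(1)[OF prime_idealD(1)[OF Q]]]
      by simp
  qed
  with prime_ideal_vimage_quot[OF K Q] show ?thesis by (simp add: VV_def Spec_def)
qed

lemma (in ring) ideal_radical_pow_subset:
  assumes K: "ideal K R" and ok: "factor_rings_ok R"
  shows "\<exists>n. ideal_pow R (ideal_radical R K) n \<subseteq> K"
proof -
  interpret h: ring_hom_ring R "R Quot K" "(+>) K" by (rule ideal.rcos_ring_hom_ring[OF K])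
  let ?N = "ideal_radical R K"
  have N_ideal: "ideal ?N R" by (rule ideal_radical_ideal[OF ring_axioms])
  have image_N: "(+>) K ` ?N \<subseteq> prime_radical (R Quot K)"
  proof
    fix y assume "y \<in> (+>) K ` ?N"
    then obtain x where x: "x \<in> ?N" and y: "y = K +> x" ..
    have "y \<in> Q" if "Q \<in> Spec (R Quot K)" for Q
    proof -
      have "{r \<in> carrier R. K +> r \<in> Q} \<in> VV R K"
        using that unfolding Spec_def by (intro quot_prime_vimage[OF K]) simp
      then have "x \<in> {r \<in> carrier R. K +> r \<in> Q}" using IntD2[OF x[unfolded II_def]] by (rule InterD[rotated])
      then show ?thesis unfolding y by simp
    qed
    moreover have "y \<in> carrier (R Quot K)" unfolding y using x h.hom_closed unfolding II_def by simp
    ultimately show "y \<in> prime_radical (R Quot K)" unfolding prime_radical_def by blast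
  qed
  obtain n where n: "ideal_pow (R Quot K) (prime_radical (R Quot K)) n \<subseteq> {\<zero>\<^bsub>R Quot K\<^esub>}"
    using ok K unfolding factor_rings_ok_def nilpotent_ideal_def by blast
  have zero: "\<zero>\<^bsub>R Quot K\<^esub> = K" unfolding FactRing_def by simp
  have "ideal_pow R ?N n \<subseteq> K"
  proof
    fix x assume x: "x \<in> ideal_pow R ?N n"
    have "K +> x \<in> ideal_pow (R Quot K) ((+>) K ` ?N) n"
      using h.image_ideal_pow_subset[OF N_ideal] x by blast
    also have "\<dots> \<subseteq> {K}" using h.S.ideal_pow_mono[OF image_N] n unfolding zero by (rule order_trans)
    finally show "x \<in> K"
      using ideal.rcos_const_imp_mem[OF K ideal.Icarr[OF ideal_pow_ideal[OF N_ideal] x]] by simp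
  qed
  then show ?thesis ..
qed

section \<open>Left ideals and extension of ideals\<close>

lemma (in ring) left_idealI:
  assumes "L \<subseteq> carrier R" "\<zero> \<in> L" "\<And>a b. a \<in> L \<Longrightarrow> b \<in> L \<Longrightarrow> a \<oplus> b \<in> L"
    "\<And>a x. a \<in> L \<Longrightarrow> x \<in> carrier R \<Longrightarrow> x \<otimes> a \<in> L"
  shows "left_ideal L R"
proof -
  have "\<ominus> a \<in> L" if "a \<in> L" for a
    using assms(4)[OF that, of "\<ominus> \<one>"] assms(1) that by (simp add: l_minus subsetD)
  then have "subgroup L (add_monoid R)"
    using assms(1-3) by (intro add.subgroupI) (auto simp: a_inv_def)
  with assms(4) show ?thesis by (simp add: left_ideal_def)
qed

lemma (in ring) left_idealD:
  assumes "left_ideal L R"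
  shows "L \<subseteq> carrier R" "\<zero> \<in> L" "\<And>a b. a \<in> L \<Longrightarrow> b \<in> L \<Longrightarrow> a \<oplus> b \<in> L"
    "\<And>a x. a \<in> L \<Longrightarrow> x \<in> carrier R \<Longrightarrow> x \<otimes> a \<in> L"
proof -
  have L: "subgroup L (add_monoid R)" using assms by (simp add: left_ideal_def)
  show "L \<subseteq> carrier R" using subgroup.subset[OF L] by simp
  show "\<zero> \<in> L" using subgroup.one_closed[OF L] by simp
  show "a \<oplus> b \<in> L" if "a \<in> L" "b \<in> L" for a b using subgroup.m_closed[OF L that] by simp
  show "x \<otimes> a \<in> L" if "a \<in> L" "x \<in> carrier R" for a x using assms that by (simp add: left_ideal_def)
qed

lemma ideal_imp_left_ideal:
  assumes "ideal J R"
  shows "left_ideal J R"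
  unfolding left_ideal_def
  using additive_subgroup.a_subgroup[OF ideal.axioms(1)[OF assms]] ideal.I_l_closed[OF assms] by simp

lemma left_gen_subset: "A \<subseteq> left_gen R A"
  by (auto simp: left_gen_def)

lemma left_gen_least: "left_ideal L R \<Longrightarrow> A \<subseteq> L \<Longrightarrow> left_gen R A \<subseteq> L"
  by (auto simp: left_gen_def)

lemma left_gen_mono: "A \<subseteq> B \<Longrightarrow> left_gen R A \<subseteq> left_gen R B"
  by (auto simp: left_gen_def)

lemma (in ring) left_gen_left_ideal:
  assumes "A \<subseteq> carrier R"
  shows "left_ideal (left_gen R A) R"
  unfolding left_gen_def
proof (rule left_idealI)
  let ?F = "{L. left_ideal L R \<and> A \<subseteq> L}"
  have "carrier R \<in> ?F" using assms by (simp add: left_idealI)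
  then show "\<Inter>?F \<subseteq> carrier R" by (rule Inter_lower)
  show "\<zero> \<in> \<Inter>?F" by (simp add: left_idealD(2))
  show "a \<oplus> b \<in> \<Inter>?F" if "a \<in> \<Inter>?F" "b \<in> \<Inter>?F" for a b
    using that by (simp add: left_idealD(3))
  show "x \<otimes> a \<in> \<Inter>?F" if "a \<in> \<Inter>?F" "x \<in> carrier R" for a x
    using that by (simp add: left_idealD(4))
qed

lemma (in ring) left_ideal_right_quotient:
  assumes "left_ideal L R" "c \<in> carrier R"
  shows "left_ideal {u \<in> carrier R. u \<otimes> c \<in> L} R"
  using left_idealD[OF assms(1)] assms(2) by (intro left_idealI) (simp_all add: l_distr m_assoc)

lemma (in ring) left_gen_mult_subset:
  assumes "A \<subseteq> carrier R" "B \<subseteq> carrier R" "c \<in> carrier R" "\<And>a. a \<in> A \<Longrightarrow> a \<otimes> c \<in> B"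
    and "u \<in> left_gen R A"
  shows "u \<otimes> c \<in> left_gen R B"
proof -
  have "left_gen R A \<subseteq> {u \<in> carrier R. u \<otimes> c \<in> left_gen R B}"
  proof (rule left_gen_least[OF left_ideal_right_quotient[OF left_gen_left_ideal[OF assms(2)] assms(3)]])
    show "A \<subseteq> {u \<in> carrier R. u \<otimes> c \<in> left_gen R B}"
      using assms(1,4) left_gen_subset[of B R] by blast
  qed
  with assms(5) show ?thesis by blast
qed

lemma (in ring) ext_ideal_ideal:
  assumes "A \<subseteq> carrier R"
  shows "ideal (ext_ideal R A) R"
proof -
  note L = left_idealD[OF left_gen_left_ideal[OF assms]]
  have closed: "x \<otimes> a \<in> ext_ideal R A" "a \<otimes> x \<in> ext_ideal R A"
    if "a \<in> ext_ideal R A" "x \<in> carrier R" for a x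
    using that L(4) by (simp_all add: ext_ideal_def m_assoc)
  show ?thesis
  proof (rule idealI[OF ring_axioms _ closed])
    show "subgroup (ext_ideal R A) (add_monoid R)"
    proof (rule add.subgroupI)
      show "ext_ideal R A \<subseteq> carrier R" by (auto simp: ext_ideal_def)
      show "ext_ideal R A \<noteq> {}" using L(2) by (auto simp: ext_ideal_def)
      show "a \<oplus> b \<in> ext_ideal R A" if "a \<in> ext_ideal R A" "b \<in> ext_ideal R A" for a b
        using that L(3) by (simp add: ext_ideal_def l_distr)
      show "\<ominus> a \<in> ext_ideal R A" if "a \<in> ext_ideal R A" for a
        using closed(1)[OF that, of "\<ominus> \<one>"] that by (simp add: ext_ideal_def l_minus)
    qed
  qed
qed

lemma ext_ideal_mono: "A \<subseteq> B \<Longrightarrow> ext_ideal R A \<subseteq> ext_ideal R B"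
  unfolding ext_ideal_def using left_gen_mono by blast

lemma (in ring) ext_ideal_subset_left_gen: "ext_ideal R A \<subseteq> left_gen R A"
proof
  fix x assume "x \<in> ext_ideal R A"
  then have x: "x \<in> carrier R" and "\<forall>t \<in> carrier R. x \<otimes> t \<in> left_gen R A"
    by (simp_all add: ext_ideal_def)
  from this(2) one_closed have "x \<otimes> \<one> \<in> left_gen R A" by (rule bspec)
  with x show "x \<in> left_gen R A" by simp
qed

lemma (in ring) ext_ideal_subset_ideal:
  assumes "ideal J R" "A \<subseteq> J"
  shows "ext_ideal R A \<subseteq> J"
proof
  fix x assume "x \<in> ext_ideal R A"
  then have "x \<in> left_gen R A" using ext_ideal_subset_left_gen by auto
  moreover have "left_gen R A \<subseteq> J" by (rule left_gen_least[OF ideal_imp_left_ideal[OF assms(1)] assms(2)])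
  ultimately show "x \<in> J" by auto
qed

lemma (in ring) ext_ideal_mult_left_gen:
  assumes "A \<subseteq> carrier R" "B \<subseteq> carrier R" "C \<subseteq> carrier R"
    and AC: "\<And>a c. a \<in> A \<Longrightarrow> c \<in> C \<Longrightarrow> a \<otimes> c \<in> B"
    and "x \<in> ext_ideal R A" "y \<in> left_gen R C"
  shows "x \<otimes> y \<in> left_gen R B"
proof -
  let ?M = "{y \<in> carrier R. \<forall>x \<in> ext_ideal R A. x \<otimes> y \<in> left_gen R B}"
  note L = left_idealD[OF left_gen_left_ideal[OF assms(2)]]
  note E = ideal.I_r_closed[OF ext_ideal_ideal[OF assms(1)]] ideal.Icarr[OF ext_ideal_ideal[OF assms(1)]]
  have "left_ideal ?M R"
  proof (rule left_idealI)
    show "?M \<subseteq> carrier R" by auto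
    show "\<zero> \<in> ?M" using L(2) E(2) by simp
    show "a \<oplus> b \<in> ?M" if "a \<in> ?M" "b \<in> ?M" for a b
      using that L(3) E(2) by (simp add: r_distr)
    show "z \<otimes> a \<in> ?M" if "a \<in> ?M" "z \<in> carrier R" for a z
      using that E by (simp add: m_assoc[symmetric])
  qed
  moreover have "C \<subseteq> ?M"
  proof
    fix c assume c: "c \<in> C"
    then have c_carrier: "c \<in> carrier R" using assms(3) by auto
    have "x \<otimes> c \<in> left_gen R B" if x: "x \<in> ext_ideal R A" for x
    proof -
      have "x \<in> left_gen R A" using x ext_ideal_subset_left_gen by auto
      then show ?thesis using left_gen_mult_subset[OF assms(1,2) c_carrier] c AC by simp
    qed
    with c_carrier show "c \<in> ?M" by simp
  qed
  ultimately have "left_gen R C \<subseteq> ?M" by (rule left_gen_least)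
  with assms(5,6) show ?thesis by auto
qed

lemma (in ring) ideal_prod_ext_ideal_subset:
  assumes "A \<subseteq> carrier R" "B \<subseteq> carrier R" "C \<subseteq> carrier R"
    and "\<And>a c. a \<in> A \<Longrightarrow> c \<in> C \<Longrightarrow> a \<otimes> c \<in> B"
  shows "ideal_prod R (ext_ideal R A) (ext_ideal R C) \<subseteq> ext_ideal R B"
proof (rule ideal_prod_subset[OF ideal.axioms(1)[OF ext_ideal_ideal[OF assms(2)]]])
  fix x e assume x: "x \<in> ext_ideal R A" and e: "e \<in> ext_ideal R C"
  have carrier: "x \<in> carrier R" "e \<in> carrier R" using x e by (simp_all add: ext_ideal_def)
  have "(x \<otimes> e) \<otimes> t \<in> left_gen R B" if t: "t \<in> carrier R" for t
  proof -
    have "e \<otimes> t \<in> left_gen R C" using e t by (simp add: ext_ideal_def)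
    with assms x have "x \<otimes> (e \<otimes> t) \<in> left_gen R B" by (rule ext_ideal_mult_left_gen)
    then show ?thesis using carrier t by (simp add: m_assoc)
  qed
  then show "x \<otimes> e \<in> ext_ideal R B" using carrier by (simp add: ext_ideal_def)
qed

lemma (in ring) ext_ideal_pow_subset:
  assumes H: "subring H R" and I: "ideal I (R\<lparr>carrier := H\<rparr>)"
  shows "ideal_pow R (ext_ideal R I) n \<subseteq> ext_ideal R (ideal_pow (R\<lparr>carrier := H\<rparr>) I n)"
proof (induct n)
  case 0
  have "\<one> \<in> left_gen R H" using left_gen_subset subringE(3)[OF H] by (rule subsetD)
  then have "x \<in> left_gen R H" if "x \<in> carrier R" for x
    using left_idealD(4)[OF left_gen_left_ideal[OF subringE(1)[OF H]]] that by force
  then show ?case by (auto simp: ext_ideal_def)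
next
  case (Suc n)
  interpret H: ring "R\<lparr>carrier := H\<rparr>" by (rule subring_is_ring[OF H])
  have pow_carrier: "ideal_pow (R\<lparr>carrier := H\<rparr>) I m \<subseteq> carrier R" for m
    using ideal_subset_carrier[OF H.ideal_pow_ideal[OF I, of m]] subringE(1)[OF H] by simp
  have "ideal_pow R (ext_ideal R I) (Suc n)
      \<subseteq> ideal_prod R (ext_ideal R (ideal_pow (R\<lparr>carrier := H\<rparr>) I n)) (ext_ideal R I)"
    using ideal_prod_mono[OF Suc subset_refl] by simp
  also have "\<dots> \<subseteq> ext_ideal R (ideal_pow (R\<lparr>carrier := H\<rparr>) I (Suc n))"
  proof (rule ideal_prod_ext_ideal_subset[OF pow_carrier pow_carrier])
    show "I \<subseteq> carrier R" using ideal_subset_carrier[OF I] subringE(1)[OF H] by simp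
    show "a \<otimes> c \<in> ideal_pow (R\<lparr>carrier := H\<rparr>) I (Suc n)"
      if "a \<in> ideal_pow (R\<lparr>carrier := H\<rparr>) I n" "c \<in> I" for a c
      using ideal_prod.prod[OF that, of "R\<lparr>carrier := H\<rparr>"] by simp
  qed
  finally show ?case .
qed

section \<open>Contraction, extension and the functors \<open>\<lambda>\<close>, \<open>\<rho>\<close>\<close>

lemma VV_subset_VV_ext_ideal:
  assumes S: "ring S" and R: "subring R S" and ok: "factor_rings_ok (S\<lparr>carrier := R\<rparr>)"
    and I: "ideal I (S\<lparr>carrier := R\<rparr>)" and J: "ideal J S"
    and V: "VV (S\<lparr>carrier := R\<rparr>) (J \<inter> R) \<subseteq> VV (S\<lparr>carrier := R\<rparr>) I"
  shows "VV S J \<subseteq> VV S (ext_ideal S I)"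
proof -
  let ?R = "S\<lparr>carrier := R\<rparr>"
  interpret S: ring S by (rule S)
  interpret R: ring ?R by (rule S.subring_is_ring[OF R])
  have I_carrier: "I \<subseteq> carrier S" using ideal_subset_carrier[OF I] subringE(1)[OF R] by simp
  obtain n where n: "ideal_pow ?R (ideal_radical ?R (J \<inter> R)) n \<subseteq> J \<inter> R"
    using R.ideal_radical_pow_subset[OF S.ideal_Int_subring[OF R J] ok] ..
  have "I \<subseteq> ideal_radical ?R (J \<inter> R)"
    using subset_ideal_radical_iff[OF ideal_subset_carrier[OF I]] V by simp
  then have I_pow: "ideal_pow ?R I n \<subseteq> J" using R.ideal_pow_mono n by blast
  have "ideal_pow S (ext_ideal S I) n \<subseteq> ext_ideal S (ideal_pow ?R I n)"
    by (rule S.ext_ideal_pow_subset[OF R I])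
  also have "\<dots> \<subseteq> J" by (rule S.ext_ideal_subset_ideal[OF J I_pow])
  finally show ?thesis by (rule VV_subset_VV_if_pow_subset[OF S S.ext_ideal_ideal[OF I_carrier]])
qed

lemma lam_VV:
  assumes S: "ring S" and R: "subring R S" and ok: "factor_rings_ok S" and J: "ideal J S"
  shows "lam S R (VV S J) = VV (S\<lparr>carrier := R\<rparr>) (J \<inter> R)"
proof -
  let ?R = "S\<lparr>carrier := R\<rparr>" and ?N = "ideal_radical S J"
  interpret S: ring S by (rule S)
  interpret R: ring ?R by (rule S.subring_is_ring[OF R])
  have "J \<subseteq> ?N" using subset_ideal_radical_iff[OF ideal_subset_carrier[OF J]] by simp
  then have "VV ?R (?N \<inter> R) \<subseteq> VV ?R (J \<inter> R)" by (intro VV_antimono) auto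
  moreover have "VV ?R (J \<inter> R) \<subseteq> VV ?R (?N \<inter> R)"
  proof -
    obtain m where m: "ideal_pow S ?N m \<subseteq> J" using S.ideal_radical_pow_subset[OF J ok] ..
    have N_R: "ideal (?N \<inter> R) ?R" by (rule S.ideal_Int_subring[OF R ideal_radical_ideal[OF S]])
    have "ideal_pow ?R (?N \<inter> R) m \<subseteq> ideal_pow S ?N m"
      by (rule S.ideal_pow_subring_subset[OF R Int_lower1])
    moreover have "ideal_pow ?R (?N \<inter> R) m \<subseteq> R"
      using ideal_subset_carrier[OF R.ideal_pow_ideal[OF N_R, of m]] by simp
    ultimately have "ideal_pow ?R (?N \<inter> R) m \<subseteq> J \<inter> R" using m by auto
    then show ?thesis by (rule VV_subset_VV_if_pow_subset[OF R.ring_axioms N_R])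
  qed
  ultimately show ?thesis unfolding lam_def by (rule subset_antisym)
qed

lemma rho_VV:
  assumes S: "ring S" and R: "subring R S" and ok: "factor_rings_ok (S\<lparr>carrier := R\<rparr>)"
    and I: "ideal I (S\<lparr>carrier := R\<rparr>)"
  shows "rho S R (VV (S\<lparr>carrier := R\<rparr>) I) = VV S (ext_ideal S I)"
proof -
  let ?R = "S\<lparr>carrier := R\<rparr>"
  let ?N = "ideal_radical ?R I"
  interpret S: ring S by (rule S)
  interpret R: ring ?R by (rule S.subring_is_ring[OF R])
  have N_ideal: "ideal ?N ?R" by (rule ideal_radical_ideal[OF R.ring_axioms])
  have N_carrier: "?N \<subseteq> carrier S" using ideal_subset_carrier[OF N_ideal] subringE(1)[OF R] by simp
  have "I \<subseteq> ?N" using subset_ideal_radical_iff[OF ideal_subset_carrier[OF I]] by simp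
  then have "VV S (ext_ideal S ?N) \<subseteq> VV S (ext_ideal S I)" by (intro VV_antimono ext_ideal_mono)
  moreover have "VV S (ext_ideal S I) \<subseteq> VV S (ext_ideal S ?N)"
  proof -
    obtain n where n: "ideal_pow ?R ?N n \<subseteq> I" using R.ideal_radical_pow_subset[OF I ok] ..
    have "ideal_pow S (ext_ideal S ?N) n \<subseteq> ext_ideal S (ideal_pow ?R ?N n)"
      by (rule S.ext_ideal_pow_subset[OF R N_ideal])
    also have "\<dots> \<subseteq> ext_ideal S I" by (rule ext_ideal_mono[OF n])
    finally show ?thesis by (rule VV_subset_VV_if_pow_subset[OF S S.ext_ideal_ideal[OF N_carrier]])
  qed
  ultimately show ?thesis unfolding rho_def by (rule subset_antisym)
qed

lemma lam_left_adjoint_rho_iff: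
  assumes S: "ring S" and R: "subring R S"
    and ok_R: "factor_rings_ok (S\<lparr>carrier := R\<rparr>)" and ok_S: "factor_rings_ok S"
  shows "lam_left_adjoint_rho S R \<longleftrightarrow>
    (\<forall>I J. ideal I (S\<lparr>carrier := R\<rparr>) \<longrightarrow> ideal J S \<longrightarrow>
       (VV (S\<lparr>carrier := R\<rparr>) (J \<inter> R) \<subseteq> VV (S\<lparr>carrier := R\<rparr>) I \<longleftrightarrow> VV S J \<subseteq> VV S (ext_ideal S I)))"
proof -
  let ?R = "S\<lparr>carrier := R\<rparr>"
  have R_ring: "ring ?R" by (rule ring.subring_is_ring[OF S R])
  have "lam_left_adjoint_rho S R \<longleftrightarrow>
    (\<forall>I J. ideal I ?R \<longrightarrow> ideal J S \<longrightarrow> (lam S R (VV S J) \<subseteq> VV ?R I \<longleftrightarrow> VV S J \<subseteq> rho S R (VV ?R I)))"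
    unfolding lam_left_adjoint_rho_def zclosed_iff_ideal[OF S] zclosed_iff_ideal[OF R_ring] by auto
  also have "\<dots> \<longleftrightarrow>
    (\<forall>I J. ideal I ?R \<longrightarrow> ideal J S \<longrightarrow> (VV ?R (J \<inter> R) \<subseteq> VV ?R I \<longleftrightarrow> VV S J \<subseteq> VV S (ext_ideal S I)))"
    using lam_VV[OF S R ok_S] rho_VV[OF S R ok_R] by simp
  finally show ?thesis .
qed

theorem lemma3p12:
  fixes S :: "('a, 'b) ring_scheme" and R :: "'a set"
  assumes "ring S"
    and "subring R S"
    and "factor_rings_ok (S\<lparr>carrier := R\<rparr>)"
    and "factor_rings_ok S"
  shows "(\<forall>I J. ideal I (S\<lparr>carrier := R\<rparr>) \<longrightarrow> ideal J S \<longrightarrow>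
            VV (S\<lparr>carrier := R\<rparr>) (J \<inter> R) \<subseteq> VV (S\<lparr>carrier := R\<rparr>) I \<longrightarrow>
            VV S J \<subseteq> VV S (ext_ideal S I))
       \<and> (lam_left_adjoint_rho S R \<longleftrightarrow>
           (\<forall>I J. ideal I (S\<lparr>carrier := R\<rparr>) \<longrightarrow> ideal J S \<longrightarrow>
              VV S J \<subseteq> VV S (ext_ideal S I) \<longrightarrow>
              VV (S\<lparr>carrier := R\<rparr>) (J \<inter> R) \<subseteq> VV (S\<lparr>carrier := R\<rparr>) I))"
proof -
  have part_i: "\<forall>I J. ideal I (S\<lparr>carrier := R\<rparr>) \<longrightarrow> ideal J S \<longrightarrow>
      VV (S\<lparr>carrier := R\<rparr>) (J \<inter> R) \<subseteq> VV (S\<lparr>carrier := R\<rparr>) I \<longrightarrow> VV S J \<subseteq> VV S (ext_ideal S I)"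
    using VV_subset_VV_ext_ideal[OF assms(1-3)] by blast
  with lam_left_adjoint_rho_iff[OF assms] show ?thesis by blast
qed

end
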